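(* Let $q\in X^*\setminus\{e\}$ and let $q_0$ be the shortest word in $P_q$. Then $$\sqrt[*]{P_q}=\bigl(P_q\setminus\{q_0\}^*\bigr)\cup\{q_0\}\subseteq\{q_0\}\cup\{v: v\sqsubseteq q\ \wedge\ |q_0|+|v|>|q|\}.$$
   Context: $X$ is a finite alphabet; $X^*$ the finite words (empty word $e$); $|w|$ is length; $w\sqsubseteq\eta$ means $w$ is a prefix of $\eta$, $w\sqsubset\eta$ a proper prefix. $P_q:=\{v: e\sqsubset v\sqsubseteq q\sqsubset v\cdot q\}$; $q_0$ is its shortest element. The star root of $P_q$ is $\sqrt[*]{P_q}:=P_q\setminus(P_q^2\cdot P_q^* )$, i.e. the elements of $P_q$ that are not a concatenation of two or more elements of $P_q$; here $L^*=\bigcup_{i\in\mathbb{N}}L^i$. *)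

theory Defs
  imports Main "HOL-Library.Sublist"
begin

text \<open>Words over a finite alphabet are lists; e is the empty list.\<close>

definition conc :: "'a list set \<Rightarrow> 'a list set \<Rightarrow> 'a list set" where
  "conc A B = {u @ v | u v. u \<in> A \<and> v \<in> B}"

fun lang_pow :: "'a list set \<Rightarrow> nat \<Rightarrow> 'a list set" where
  "lang_pow L 0 = {[]}"
| "lang_pow L (Suc n) = conc L (lang_pow L n)"

definition lang_star :: "'a list set \<Rightarrow> 'a list set" where
  "lang_star L = (\<Union>i. lang_pow L i)"

definition Pq :: "'a list \<Rightarrow> 'a list set" where
  "Pq q = {v. strict_prefix [] v \<and> prefix v q \<and> strict_prefix q (v @ q)}"

definition star_root :: "'a list set \<Rightarrow> 'a list set" where
  "star_root L = L - conc (lang_pow L 2) (lang_star L)"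

end

theory Submission imports Defs begin

(* A nonempty prefix v of q lies in P_q exactly when |v| is a period of q,
   so P_q is the set of prefixes of q whose lengths are periods.  Let p = |q0| be the
   least such length, i.e. the least positive period of q.

   (1) A Fine-Wilf type argument (periods a > b with a + b <= |q| give the period a - b)
       shows that p divides every period a with a + p <= |q|.
   (2) Because q is p-periodic, a prefix of q whose length is a multiple of p is a power
       of q0; hence an element of P_q lies in {q0}* iff p divides its length.
   (3) If v in P_q factors as u1 u2 w with u1, u2 in P_q and w in P_q*, then every factor
       is short enough for (1), so p divides |v| and |v| >= 2p, i.e. v is a power
       q0^m with m >= 2.  Conversely every q0^m with m >= 2 is such a product.
   Hence the star root consists of q0 together with the elements of P_q outside {q0}*,
   and by (1)+(2) every element of P_q outside {q0}* is longer than |q| - p. *)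

definition has_period :: "'a list \<Rightarrow> nat \<Rightarrow> bool" where
  "has_period q a \<longleftrightarrow> (\<forall>i. i + a < length q \<longrightarrow> q ! i = q ! (i + a))"

lemma prefix_nth_iff:
  "prefix v q \<longleftrightarrow> length v \<le> length q \<and> (\<forall>i<length v. v ! i = q ! i)"
proof
  assume "prefix v q"
  then obtain z where "q = v @ z" by (auto simp: prefix_def)
  then show "length v \<le> length q \<and> (\<forall>i<length v. v ! i = q ! i)" by (auto simp: nth_append)
next
  assume h: "length v \<le> length q \<and> (\<forall>i<length v. v ! i = q ! i)"
  then have "v = take (length v) q" by (intro nth_equalityI) auto
  then show "prefix v q" by (metis take_is_prefix)
qed

lemma Pq_iff: "v \<in> Pq q \<longleftrightarrow> v \<noteq> [] \<and> prefix v q \<and> has_period q (length v)"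
proof (cases "v \<noteq> [] \<and> prefix v q")
  case True
  then have ne: "v \<noteq> []" and vq: "\<forall>i<length v. v ! i = q ! i"
    using prefix_nth_iff by blast+
  have "strict_prefix q (v @ q) \<longleftrightarrow> (\<forall>i<length q. q ! i = (v @ q) ! i)"
    using ne by (auto simp: strict_prefix_def prefix_nth_iff)
  also have "\<dots> \<longleftrightarrow> has_period q (length v)"
  proof
    assume h: "\<forall>i<length q. q ! i = (v @ q) ! i"
    show "has_period q (length v)" unfolding has_period_def
    proof (intro allI impI)
      fix i assume "i + length v < length q"
      then show "q ! i = q ! (i + length v)" using h[rule_format, of "i + length v"]
        by (simp add: nth_append)
    qed
  next
    assume h: "has_period q (length v)"
    show "\<forall>i<length q. q ! i = (v @ q) ! i"
    proof (intro allI impI)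
      fix i assume i: "i < length q"
      show "q ! i = (v @ q) ! i"
      proof (cases "i < length v")
        case True then show ?thesis using vq by (simp add: nth_append)
      next
        case False
        then show ?thesis using h i unfolding has_period_def
          by (auto simp: nth_append dest: spec[of _ "i - length v"])
      qed
    qed
  qed
  finally show ?thesis using True by (auto simp: Pq_def strict_prefix_def)
qed (auto simp: Pq_def strict_prefix_def)

lemma has_period_diff:
  assumes "has_period q a" "has_period q b" "b < a" "a + b \<le> length q"
  shows "has_period q (a - b)"
  unfolding has_period_def
proof (intro allI impI)
  fix i assume i: "i + (a - b) < length q"
  show "q ! i = q ! (i + (a - b))"
  proof (cases "b \<le> i")
    case True
    have "q ! (i - b) = q ! (i - b + b)"
      using assms(2) i True unfolding has_period_def by auto
    moreover have "q ! (i - b) = q ! (i - b + a)"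
      using assms(1,3) i True unfolding has_period_def by auto
    ultimately show ?thesis using True assms(3) by (simp add: add.commute)
  next
    case False
    have "q ! i = q ! (i + a)" "q ! (i + (a - b)) = q ! (i + (a - b) + b)"
      using assms False unfolding has_period_def by auto
    then show ?thesis using assms(3) by simp
  qed
qed

lemma least_period_dvd:
  assumes p: "has_period q p" "0 < p"
    and least: "\<And>b. 0 < b \<Longrightarrow> b < p \<Longrightarrow> \<not> has_period q b"
  shows "has_period q a \<Longrightarrow> 0 < a \<Longrightarrow> a + p \<le> length q \<Longrightarrow> p dvd a"
proof (induction a rule: less_induct)
  case (less a)
  consider "a < p" | "a = p" | "p < a" by linarith
  then show ?case
  proof cases
    case 1 then show ?thesis using least less.prems by blast
  next
    case 2 then show ?thesis by simp
  next
    case 3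
    have "has_period q (a - p)" using has_period_diff[OF less.prems(1) p(1) 3] less.prems(3) by simp
    then have "p dvd a - p" using less.IH[of "a - p"] 3 p(2) less.prems(3) by auto
    then show ?thesis using 3 by (metis dvd_add_triv_right_iff le_add_diff_inverse2 less_imp_le_nat)
  qed
qed

lemma has_period_mult:
  assumes "has_period q p"
  shows "i + k * p < length q \<Longrightarrow> q ! (i + k * p) = q ! i"
proof (induction k)
  case (Suc k)
  then have "q ! (i + k * p) = q ! (i + k * p + p)"
    using assms unfolding has_period_def by (simp add: add.assoc)
  then show ?case using Suc by (simp add: ac_simps)
qed simp

lemma periodic_prefix_power:
  assumes "has_period q p"
  shows "m * p \<le> length q \<Longrightarrow> take (m * p) q = concat (replicate m (take p q))"
proof (induction m)
  case (Suc m)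
  have le: "m * p + p \<le> length q" using Suc.prems by (simp add: add.commute)
  have "take p (drop (m * p) q) = take p q"
  proof (rule nth_equalityI)
    fix i assume "i < length (take p (drop (m * p) q))"
    then have "i < p" "i + m * p < length q" using le by auto
    then show "take p (drop (m * p) q) ! i = take p q ! i"
      using has_period_mult[OF assms] by (simp add: add.commute)
  qed (use le in simp)
  then have "take (m * p + p) q = concat (replicate m (take p q)) @ take p q"
    using Suc le by (simp add: take_add)
  then show ?case by (simp add: add.commute replicate_append_same[symmetric])
qed simp

lemma lang_star_iff: "v \<in> lang_star L \<longleftrightarrow> (\<exists>i. v \<in> lang_pow L i)"
  by (auto simp: lang_star_def)

lemma lang_pow_singleton: "lang_pow {x} m = {concat (replicate m x)}"
  by (induction m) (auto simp: conc_def)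

lemma lang_star_singleton: "v \<in> lang_star {x} \<longleftrightarrow> (\<exists>m. v = concat (replicate m x))"
  by (simp add: lang_star_iff lang_pow_singleton)

lemma power_in_lang_pow: "x \<in> L \<Longrightarrow> concat (replicate k x) \<in> lang_pow L k"
  by (induction k) (auto simp: conc_def)

lemma power_decomposable:
  assumes "x \<in> L" "2 \<le> m"
  shows "concat (replicate m x) \<in> conc (lang_pow L 2) (lang_star L)"
proof -
  obtain k where m: "m = Suc (Suc k)" using assms(2) by (metis add_2_eq_Suc le_Suc_ex)
  have "x @ x @ [] \<in> lang_pow L 2" using assms(1)
    unfolding numeral_2_eq_2 lang_pow.simps conc_def by blast
  moreover have "concat (replicate k x) \<in> lang_star L"
    using power_in_lang_pow[OF assms(1)] lang_star_iff by blast
  moreover have "concat (replicate m x) = (x @ x @ []) @ concat (replicate k x)" using m by simp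
  ultimately show ?thesis unfolding conc_def by blast
qed

lemma lang_pow_length_dvd:
  assumes "\<And>u. u \<in> L \<Longrightarrow> length u + p \<le> N \<Longrightarrow> p dvd length u"
  shows "w \<in> lang_pow L n \<Longrightarrow> length w + p \<le> N \<Longrightarrow> p dvd length w"
proof (induction n arbitrary: w)
  case (Suc n)
  then obtain x w' where "w = x @ w'" "x \<in> L" "w' \<in> lang_pow L n" by (auto simp: conc_def)
  then show ?case using Suc assms by fastforce
qed simp

locale shortest_period_word =
  fixes q q0 :: "'a list"
  assumes q0_in: "q0 \<in> Pq q"
    and q0_shortest: "\<forall>v \<in> Pq q. length q0 \<le> length v"
begin

lemma q0_props: "q0 \<noteq> []" "prefix q0 q" "has_period q (length q0)"
  using q0_in by (auto simp: Pq_iff)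

lemma q0_eq_take: "q0 = take (length q0) q"
  using q0_props(2) by (metis prefix_def append_eq_conv_conj)

lemma Pq_short_length_dvd:
  assumes "u \<in> Pq q" "length u + length q0 \<le> length q"
  shows "length q0 dvd length u"
proof -
  have least: "\<not> has_period q b" if b: "0 < b" "b < length q0" for b
  proof
    assume "has_period q b"
    moreover have "b < length q" using b prefix_length_le[OF q0_props(2)] by simp
    ultimately have "take b q \<in> Pq q" using b(1) by (auto simp: Pq_iff take_is_prefix)
    then show False using q0_shortest b(2) by fastforce
  qed
  show ?thesis
    using least_period_dvd[OF q0_props(3) _ least] assms q0_props by (auto simp: Pq_iff)
qed

lemma Pq_pow_short_length_dvd:
  "w \<in> lang_pow (Pq q) n \<Longrightarrow> length w + length q0 \<le> length q \<Longrightarrow> length q0 dvd length w"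
  by (rule lang_pow_length_dvd[OF Pq_short_length_dvd])

lemma Pq_power_iff:
  assumes "v \<in> Pq q"
  shows "v \<in> lang_star {q0} \<longleftrightarrow> length q0 dvd length v"
proof
  assume "length q0 dvd length v"
  then obtain m where m: "length v = m * length q0" by (metis dvd_def mult.commute)
  have pv: "prefix v q" using assms by (simp add: Pq_iff)
  then have "v = take (m * length q0) q" using m by (metis prefix_def append_eq_conv_conj)
  also have "\<dots> = concat (replicate m q0)"
    using periodic_prefix_power[OF q0_props(3)] q0_eq_take m prefix_length_le[OF pv] by simp
  finally show "v \<in> lang_star {q0}" by (auto simp: lang_star_singleton)
qed (auto simp: lang_star_singleton length_concat sum_list_replicate)

lemma Pq_decomposable:
  assumes v: "v \<in> Pq q" and dec: "v \<in> conc (lang_pow (Pq q) 2) (lang_star (Pq q))"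
  shows "v \<in> lang_star {q0}" "v \<noteq> q0"
proof -
  obtain u1 u2 w n where v_eq: "v = u1 @ u2 @ w"
    and u: "u1 \<in> Pq q" "u2 \<in> Pq q" and w: "w \<in> lang_pow (Pq q) n"
    using dec by (auto simp: conc_def numeral_2_eq_2 lang_star_iff)
  have long: "length q0 \<le> length u1" "length q0 \<le> length u2"
    using u q0_shortest by auto
  have lv: "length v \<le> length q" using v by (simp add: Pq_iff prefix_length_le)
  have "length q0 dvd length u1"
    using Pq_short_length_dvd[OF u(1)] v_eq long lv by simp
  moreover have "u2 @ w \<in> lang_pow (Pq q) (Suc n)" using u(2) w by (auto simp: conc_def)
  moreover have "length (u2 @ w) + length q0 \<le> length q" using v_eq long lv by simp
  ultimately have "length q0 dvd length (u2 @ w)" "length q0 dvd length u1"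
    using Pq_pow_short_length_dvd by blast+
  then show "v \<in> lang_star {q0}" using Pq_power_iff[OF v] v_eq by simp
  show "v \<noteq> q0" using v_eq long q0_props(1) by auto
qed

lemma star_root_Pq: "star_root (Pq q) = (Pq q - lang_star {q0}) \<union> {q0}"
proof
  show "star_root (Pq q) \<subseteq> (Pq q - lang_star {q0}) \<union> {q0}"
  proof
    fix v assume v: "v \<in> star_root (Pq q)"
    then have vP: "v \<in> Pq q" by (simp add: star_root_def)
    show "v \<in> (Pq q - lang_star {q0}) \<union> {q0}"
    proof (rule ccontr)
      assume "v \<notin> (Pq q - lang_star {q0}) \<union> {q0}"
      then obtain m where vm: "v = concat (replicate m q0)" and "v \<noteq> q0"
        using vP by (auto simp: lang_star_singleton)
      moreover have "v \<noteq> []" using vP by (simp add: Pq_iff)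
      ultimately have "2 \<le> m" using vm by (cases m; cases "m - 1") auto
      then show False
        using v vm power_decomposable[OF q0_in] by (simp add: star_root_def)
    qed
  qed
next
  show "(Pq q - lang_star {q0}) \<union> {q0} \<subseteq> star_root (Pq q)"
    using q0_in Pq_decomposable by (auto simp: star_root_def)
qed

lemma Pq_nonpower_long:
  assumes "v \<in> Pq q" "v \<notin> lang_star {q0}"
  shows "length q0 + length v > length q"
  using assms Pq_short_length_dvd Pq_power_iff by fastforce

end

theorem mainTheorem11:
  fixes q q0 :: "('a::finite) list"
  assumes "q \<noteq> []"
    and "q0 \<in> Pq q"
    and "\<forall>v \<in> Pq q. length q0 \<le> length v"
  shows "star_root (Pq q) = (Pq q - lang_star {q0}) \<union> {q0}
         \<and> (Pq q - lang_star {q0}) \<union> {q0}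
             \<subseteq> {q0} \<union> {v. prefix v q \<and> length q0 + length v > length q}"
proof -
  interpret shortest_period_word q q0 using assms(2,3) by unfold_locales
  have "(Pq q - lang_star {q0}) \<union> {q0}
             \<subseteq> {q0} \<union> {v. prefix v q \<and> length q0 + length v > length q}"
    using Pq_nonpower_long by (auto simp: Pq_iff)
  then show ?thesis using star_root_Pq by blast
qed

end
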